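(* Let $S$ be an entropy function for a finite set $X$, $X'\subset X$, and $S'(A):=\min_{\hat A\subseteq X\setminus X'}S(A\cup\hat A)$ for $A\subseteq X'$. For $f':X'\to\mathbb R$ let $f_{f'}:X\to\mathbb R$ equal $f'$ on $X'$ and $0$ on $X\setminus X'$. Then $f'$ is an EDF for $S'$ if and only if $f_{f'}$ is an EDF for $S$.
   Context: An entropy function for a finite set $X$ is a function $S:2^X\to[0,\infty)$ with $S(\emptyset)=0$, $S(A)+S(B)\ge S(A\cap B)+S(A\cup B)$ and $S(A)+S(B)\ge S(A\setminus B)+S(B\setminus A)$ for all $A,B\subseteq X$. An entanglement distribution function (EDF) for $S$ is a function $f:X\to\mathbb R$ with $\big|\sum_{x\in A}f(x)\big|\le S(A)$ for all $A\subseteq X$. *)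

theory Defs
  imports "HOL-Analysis.Analysis"
begin

definition entropy_function :: "'a set \<Rightarrow> ('a set \<Rightarrow> real) \<Rightarrow> bool" where
  "entropy_function X S \<longleftrightarrow> finite X \<and> S {} = 0 \<and>
     (\<forall>A. A \<subseteq> X \<longrightarrow> S A \<ge> 0) \<and>
     (\<forall>A B. A \<subseteq> X \<longrightarrow> B \<subseteq> X \<longrightarrow> S A + S B \<ge> S (A \<inter> B) + S (A \<union> B)) \<and>
     (\<forall>A B. A \<subseteq> X \<longrightarrow> B \<subseteq> X \<longrightarrow> S A + S B \<ge> S (A - B) + S (B - A))"

definition EDF :: "'a set \<Rightarrow> ('a set \<Rightarrow> real) \<Rightarrow> ('a \<Rightarrow> real) \<Rightarrow> bool" where
  "EDF X S f \<longleftrightarrow> (\<forall>A. A \<subseteq> X \<longrightarrow> \<bar>\<Sum>x\<in>A. f x\<bar> \<le> S A)"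

definition reduced_entropy :: "'a set \<Rightarrow> 'a set \<Rightarrow> ('a set \<Rightarrow> real) \<Rightarrow> 'a set \<Rightarrow> real" where
  "reduced_entropy X X' S A = Min ((\<lambda>H. S (A \<union> H)) ` Pow (X - X'))"

definition zero_ext :: "'a set \<Rightarrow> ('a \<Rightarrow> real) \<Rightarrow> 'a \<Rightarrow> real" where
  "zero_ext X' f x = (if x \<in> X' then f x else 0)"

end

theory Submission
  imports Defs
begin

text \<open>Only the finiteness of X is needed: every B \<subseteq> X splits uniquely as A \<union> H with
  A = B \<inter> X' and H = B - X', the zero extension of f' has the same sum over B as f' over A,
  and the minimum defining S'(A) is bounded below by c exactly when every S(A \<union> H) is.\<close>

lemma sum_zero_ext:
  assumes "finite A"
  shows "(\<Sum>x\<in>A. zero_ext X' f x) = (\<Sum>x\<in>A \<inter> X'. f x)"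
  using assms by (simp add: zero_ext_def sum.If_cases Int_def)

lemma le_reduced_entropy_iff:
  assumes "finite X"
  shows "c \<le> reduced_entropy X X' S A \<longleftrightarrow> (\<forall>H \<subseteq> X - X'. c \<le> S (A \<union> H))"
proof -
  have "finite ((\<lambda>H. S (A \<union> H)) ` Pow (X - X'))" and "(\<lambda>H. S (A \<union> H)) ` Pow (X - X') \<noteq> {}"
    using assms by auto
  then show ?thesis
    unfolding reduced_entropy_def by (auto simp: Min_ge_iff)
qed

lemma EDF_reduced_entropy_iff:
  assumes "finite X"
  shows "EDF X' (reduced_entropy X X' S) f \<longleftrightarrow>
    (\<forall>A \<subseteq> X'. \<forall>H \<subseteq> X - X'. \<bar>\<Sum>x\<in>A. f x\<bar> \<le> S (A \<union> H))"
  unfolding EDF_def le_reduced_entropy_iff[OF assms] by blast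

lemma all_subset_split_iff:
  assumes "X' \<subseteq> X"
  shows "(\<forall>B \<subseteq> X. P (B \<inter> X') (B - X')) \<longleftrightarrow> (\<forall>A \<subseteq> X'. \<forall>H \<subseteq> X - X'. P A H)"
proof safe
  fix A H
  assume "\<forall>B \<subseteq> X. P (B \<inter> X') (B - X')" and "A \<subseteq> X'" and "H \<subseteq> X - X'"
  moreover have "(A \<union> H) \<inter> X' = A" and "(A \<union> H) - X' = H" and "A \<union> H \<subseteq> X"
    using \<open>A \<subseteq> X'\<close> \<open>H \<subseteq> X - X'\<close> assms by blast+
  ultimately show "P A H" by metis
qed (meson Diff_mono Int_lower2 order_refl)

lemma EDF_zero_ext_iff:
  assumes "finite X"
  shows "EDF X S (zero_ext X' f) \<longleftrightarrow>
    (\<forall>B \<subseteq> X. \<bar>\<Sum>x\<in>B \<inter> X'. f x\<bar> \<le> S ((B \<inter> X') \<union> (B - X')))"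
  unfolding EDF_def Int_Diff_Un using assms by (metis finite_subset sum_zero_ext)

theorem proposition27:
  fixes X X' :: "'a set" and S :: "'a set \<Rightarrow> real" and f' :: "'a \<Rightarrow> real"
  assumes "entropy_function X S"
    and "X' \<subseteq> X"
  shows "EDF X' (reduced_entropy X X' S) f' \<longleftrightarrow> EDF X S (zero_ext X' f')"
proof -
  have finX: "finite X"
    using assms(1) unfolding entropy_function_def by blast
  show ?thesis
    unfolding EDF_reduced_entropy_iff[OF finX] EDF_zero_ext_iff[OF finX]
    using all_subset_split_iff[OF assms(2), of "\<lambda>A H. \<bar>\<Sum>x\<in>A. f' x\<bar> \<le> S (A \<union> H)"]
    by simp
qed

end
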